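(* Let $\mathcal{D}=\mathcal{P}_{\mathcal{D}}\cup\mathcal{L}_{\mathcal{D}}$ be a non-primal dominating set of the incidence graph of $\mathrm{PG}(2,q)$, $q=p^h$, $p$ prime. If $|\mathcal{D}|+|\mathcal{P}_{\mathcal{D}}|\leq 4q-3$, then $\mathcal{P}_{\mathcal{D}}$ is a blocking set. Dually, if $|\mathcal{D}|+|\mathcal{L}_{\mathcal{D}}|\leq 4q-3$, then $\mathcal{L}_{\mathcal{D}}$ is a covering set.
   Context: $\mathrm{PG}(2,q)$ is the Desarguesian projective plane of order $q$. A dominating set $\mathcal{D}=\mathcal{P}_{\mathcal{D}}\cup\mathcal{L}_{\mathcal{D}}$ of its incidence graph is a set of points and lines such that every point not in $\mathcal{P}_{\mathcal{D}}$ lies on a line of $\mathcal{L}_{\mathcal{D}}$ and every line not in $\mathcal{L}_{\mathcal{D}}$ contains a point of $\mathcal{P}_{\mathcal{D}}$. $\mathcal{D}$ is primal if it contains $q$ concurrent lines or $q$ collinear points. A blocking set is a point set meeting every line; a covering set is a line set whose union contains all points. *)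

theory Defs
  imports Main
begin

text \<open>The Desarguesian plane PG(2,q) over a finite field of type 'a (q = CARD('a),
 automatically a prime power).\<close>

type_synonym 'a vec3 = "'a \<times> 'a \<times> 'a"

definition smult3 :: "'a::field \<Rightarrow> 'a vec3 \<Rightarrow> 'a vec3" where
  "smult3 c v = (case v of (x,y,z) \<Rightarrow> (c*x, c*y, c*z))"

definition dot3 :: "'a::field vec3 \<Rightarrow> 'a vec3 \<Rightarrow> 'a" where
  "dot3 v w = (case v of (x,y,z) \<Rightarrow> case w of (a,b,c) \<Rightarrow> x*a + y*b + z*c)"

definition proj_class :: "'a::field vec3 \<Rightarrow> 'a vec3 set" where
  "proj_class v = {smult3 c v | c. c \<noteq> 0}"

definition pg_points :: "'a::field vec3 set set" where
  "pg_points = {proj_class v | v. v \<noteq> (0,0,0)}"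

text \<open>Lines are given by their dual coordinates.\<close>
definition pg_lines :: "'a::field vec3 set set" where
  "pg_lines = {proj_class w | w. w \<noteq> (0,0,0)}"

definition incident :: "'a::field vec3 set \<Rightarrow> 'a vec3 set \<Rightarrow> bool" where
  "incident P L \<longleftrightarrow> (\<exists>v\<in>P. \<exists>w\<in>L. dot3 v w = 0)"

definition dominating :: "'a::field vec3 set set \<Rightarrow> 'a vec3 set set \<Rightarrow> bool" where
  "dominating PD LD \<longleftrightarrow> PD \<subseteq> pg_points \<and> LD \<subseteq> pg_lines \<and>
     (\<forall>P\<in>pg_points - PD. \<exists>L\<in>LD. incident P L) \<and>
     (\<forall>L\<in>pg_lines - LD. \<exists>P\<in>PD. incident P L)"

definition primal :: "nat \<Rightarrow> 'a::field vec3 set set \<Rightarrow> 'a vec3 set set \<Rightarrow> bool" where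
  "primal q PD LD \<longleftrightarrow>
     (\<exists>S\<subseteq>LD. card S = q \<and> (\<exists>P\<in>pg_points. \<forall>L\<in>S. incident P L)) \<or>
     (\<exists>S\<subseteq>PD. card S = q \<and> (\<exists>L\<in>pg_lines. \<forall>P\<in>S. incident P L))"

definition blocking_set :: "'a::field vec3 set set \<Rightarrow> bool" where
  "blocking_set B \<longleftrightarrow> B \<subseteq> pg_points \<and> (\<forall>L\<in>pg_lines. \<exists>P\<in>B. incident P L)"

definition covering_set :: "'a::field vec3 set set \<Rightarrow> bool" where
  "covering_set C \<longleftrightarrow> C \<subseteq> pg_lines \<and> (\<forall>P\<in>pg_points. \<exists>L\<in>C. incident P L)"

end

theory Submission
  imports Defs "HOL-Library.Cardinality" "HOL-Computational_Algebra.Polynomial"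
begin

text \<open>Suppose \<open>PD\<close> is not a blocking set and let \<open>M\<close> be the set of lines missing \<open>PD\<close>; by
  domination \<open>M \<subseteq> LD\<close>, and by non-primality every point lies on fewer than \<open>q\<close> lines of
  \<open>LD\<close> and every line carries fewer than \<open>q\<close> points of \<open>PD\<close>.  The key tool is Jamison's bound:
  a point set blocking every line except \<open>h\<close> and missing \<open>h\<close> has at least \<open>2q - 1\<close> points,
  proved by a Chevalley--Warning count over \<open>GF(q)\<^sup>2\<close>.  Adding to \<open>PD\<close> points that cover the
  lines of \<open>M - {h}\<close> off \<open>h\<close> gives such a set.

  If some \<open>h \<in> M\<close> has no point lying on more than half of the lines of \<open>M\<close>, these lines can
  be covered in pairs, so \<open>2|PD| + |M| \<ge> 4q - 2\<close>.  Otherwise all lines of \<open>M\<close> pass through one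
  point \<open>Q\<close>.  Covering a line \<open>\<rho> \<notin> LD\<close> through \<open>Q\<close> by lines of \<open>LD\<close>, and projecting from a
  point \<open>u \<in> \<rho> - PD\<close> onto another line, gives \<open>|PD| + |{L \<in> LD. Q \<notin> L}| \<ge> 2q\<close>, while
  Jamison gives \<open>|PD| + |M| \<ge> 2q\<close>; adding, \<open>2|PD| + |LD| \<ge> 4q\<close>.  The statement about
  covering sets is the dual one, since \<open>PG(2,q)\<close> is self-dual.\<close>

section \<open>Power sums over finite fields\<close>

lemma of_nat_CARD_eq_0: "of_nat CARD('a) = (0::'a::{field,finite})"
proof -
  have "(\<Sum>x\<in>UNIV. x) = (\<Sum>x\<in>UNIV. x + (1::'a))"
    by (rule sum.reindex_bij_witness[of _ "\<lambda>x. x + 1" "\<lambda>x. x - 1"]) auto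
  thus ?thesis by (simp add: sum.distrib)
qed

lemma CARD_field_ge_2: "2 \<le> CARD('a::{field,finite})"
proof -
  have "card {0::'a, 1} \<le> CARD('a)" by (rule card_mono) auto
  thus ?thesis by simp
qed

lemma card_roots_of_unity_le:
  assumes "0 < j"
  shows "card {x::'a::idom. x ^ j = 1} \<le> j"
proof -
  let ?p = "monom (1::'a) j + (- 1)"
  have deg: "degree ?p = j"
    using assms by (subst degree_add_eq_left) (simp_all add: degree_monom_eq)
  hence "card {x. poly ?p x = 0} \<le> j"
    using card_poly_roots_bound[of ?p] assms by fastforce
  thus ?thesis by (simp add: poly_monom)
qed

lemma sum_UNIV_power_eq_0:
  assumes "j < CARD('a) - 1"
  shows "(\<Sum>x::'a::{field,finite}\<in>UNIV. x ^ j) = 0"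
proof (cases "j = 0")
  case True
  thus ?thesis using of_nat_CARD_eq_0 by simp
next
  case False
  have "card {x::'a. x ^ j = 1} \<le> j" using False by (simp add: card_roots_of_unity_le)
  moreover have "card (UNIV - {0::'a}) = CARD('a) - 1" by (simp add: card_Diff_singleton)
  ultimately have "card {x::'a. x ^ j = 1} < card (UNIV - {0::'a})" using assms by linarith
  hence "\<not> UNIV - {0} \<subseteq> {x::'a. x ^ j = 1}" by (meson card_mono finite leD)
  then obtain c :: 'a where c: "c \<noteq> 0" "c ^ j \<noteq> 1" by blast
  have "(\<Sum>x\<in>UNIV. x ^ j) = (\<Sum>x\<in>UNIV. (c * x) ^ j)"
    by (rule sum.reindex_bij_witness[of _ "\<lambda>x. c * x" "\<lambda>x. x / c"]) (simp_all add: c)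
  also have "\<dots> = c ^ j * (\<Sum>x\<in>UNIV. x ^ j)"
    by (simp add: power_mult_distrib sum_distrib_left)
  finally have "(c ^ j - 1) * (\<Sum>x\<in>UNIV. x ^ j) = 0" by (simp add: algebra_simps)
  thus ?thesis using c by simp
qed

lemma prod_affine_expansion:
  fixes a b c :: "'i \<Rightarrow> 'a::comm_ring_1"
  assumes "finite I"
  shows "(\<Prod>i\<in>I. c i + \<alpha> * a i + \<beta> * b i) =
    (\<Sum>X\<in>Pow I. \<Sum>Y\<in>Pow X. \<alpha> ^ card Y * \<beta> ^ card (X - Y) *
       ((\<Prod>i\<in>Y. a i) * (\<Prod>i\<in>X - Y. b i) * (\<Prod>i\<in>I - X. c i)))"
proof -
  have "(\<Prod>i\<in>I. c i + \<alpha> * a i + \<beta> * b i) = (\<Prod>i\<in>I. (\<alpha> * a i + \<beta> * b i) + c i)"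
    by (simp add: algebra_simps)
  also have "\<dots> = (\<Sum>X\<in>Pow I. (\<Prod>i\<in>X. \<alpha> * a i + \<beta> * b i) * (\<Prod>i\<in>I - X. c i))"
    by (rule prod_add[OF assms])
  also have "\<dots> = (\<Sum>X\<in>Pow I. (\<Sum>Y\<in>Pow X. (\<Prod>i\<in>Y. \<alpha> * a i) * (\<Prod>i\<in>X - Y. \<beta> * b i)) *
                     (\<Prod>i\<in>I - X. c i))"
    using assms by (intro sum.cong refl) (simp add: prod_add finite_subset)
  also have "\<dots> = (\<Sum>X\<in>Pow I. \<Sum>Y\<in>Pow X. \<alpha> ^ card Y * \<beta> ^ card (X - Y) *
       ((\<Prod>i\<in>Y. a i) * (\<Prod>i\<in>X - Y. b i) * (\<Prod>i\<in>I - X. c i)))"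
    by (simp add: sum_distrib_left sum_distrib_right prod.distrib mult_ac)
  finally show ?thesis .
qed

lemma sum_swap_outer_pair:
  "(\<Sum>x\<in>A. \<Sum>y\<in>B. \<Sum>X\<in>C. \<Sum>Y\<in>D X. f x y X Y) =
   (\<Sum>X\<in>C. \<Sum>Y\<in>D X. \<Sum>x\<in>A. \<Sum>y\<in>B. f x y X Y)"
proof -
  have "(\<Sum>x\<in>A. \<Sum>y\<in>B. \<Sum>X\<in>C. \<Sum>Y\<in>D X. f x y X Y) =
        (\<Sum>x\<in>A. \<Sum>X\<in>C. \<Sum>Y\<in>D X. \<Sum>y\<in>B. f x y X Y)"
    by (simp add: sum.swap[of _ B])
  also have "\<dots> = (\<Sum>X\<in>C. \<Sum>Y\<in>D X. \<Sum>x\<in>A. \<Sum>y\<in>B. f x y X Y)"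
    by (simp add: sum.swap[of _ A])
  finally show ?thesis .
qed

text \<open>Chevalley--Warning in two variables: after expansion every monomial has one exponent
  below \<open>q - 1\<close>, and the power sums of such exponents vanish.\<close>
lemma sum_UNIV2_prod_affine_eq_0:
  fixes a b c :: "'i \<Rightarrow> 'a::{field,finite}"
  assumes fin: "finite I" and card_I: "card I < 2 * (CARD('a) - 1)"
  shows "(\<Sum>\<alpha>\<in>UNIV. \<Sum>\<beta>\<in>UNIV. \<Prod>i\<in>I. c i + \<alpha> * a i + \<beta> * b i) = 0"
proof -
  define K where "K X Y = (\<Prod>i\<in>Y. a i) * (\<Prod>i\<in>X - Y. b i) * (\<Prod>i\<in>I - X. c i)" for X Y
  have monomial_sum: "(\<Sum>\<alpha>\<in>UNIV. \<Sum>\<beta>\<in>UNIV. \<alpha> ^ card Y * \<beta> ^ card (X - Y) * K X Y) = 0"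
    if "X \<subseteq> I" "Y \<subseteq> X" for X Y
  proof -
    have "finite X" using that fin finite_subset by blast
    hence "card Y + card (X - Y) = card X"
      using that by (metis card_Diff_subset card_mono finite_subset le_add_diff_inverse)
    moreover have "card X \<le> card I" using that fin by (simp add: card_mono)
    ultimately have "card Y < CARD('a) - 1 \<or> card (X - Y) < CARD('a) - 1"
      using card_I by linarith
    thus ?thesis
      by (auto simp: sum_UNIV_power_eq_0 sum_product[symmetric] sum_distrib_right[symmetric])
  qed
  have "(\<Sum>\<alpha>\<in>UNIV. \<Sum>\<beta>\<in>UNIV. \<Prod>i\<in>I. c i + \<alpha> * a i + \<beta> * b i) =
     (\<Sum>X\<in>Pow I. \<Sum>Y\<in>Pow X. \<Sum>\<alpha>\<in>UNIV. \<Sum>\<beta>\<in>UNIV. \<alpha> ^ card Y * \<beta> ^ card (X - Y) * K X Y)"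
    unfolding prod_affine_expansion[OF fin] K_def by (rule sum_swap_outer_pair)
  also have "\<dots> = 0" using monomial_sum by (simp add: sum.neutral)
  finally show ?thesis .
qed

section \<open>Coordinates of \<open>PG(2,q)\<close>\<close>

definition cross3 :: "'a::field vec3 \<Rightarrow> 'a vec3 \<Rightarrow> 'a vec3" where
  "cross3 v w = (case v of (x1,y1,z1) \<Rightarrow> case w of (x2,y2,z2) \<Rightarrow>
     (y1*z2 - z1*y2, z1*x2 - x1*z2, x1*y2 - y1*x2))"

definition lincomb3 :: "'a::field \<Rightarrow> 'a vec3 \<Rightarrow> 'a \<Rightarrow> 'a vec3 \<Rightarrow> 'a vec3" where
  "lincomb3 \<alpha> u \<beta> v = (case u of (u1,u2,u3) \<Rightarrow> case v of (v1,v2,v3) \<Rightarrow>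
     (\<alpha>*u1 + \<beta>*v1, \<alpha>*u2 + \<beta>*v2, \<alpha>*u3 + \<beta>*v3))"

lemma dot3_smult3_left: "dot3 (smult3 c v) w = c * dot3 v w"
  by (cases v; cases w) (simp add: dot3_def smult3_def algebra_simps)

lemma dot3_smult3_right: "dot3 v (smult3 c w) = c * dot3 v w"
  by (cases v; cases w) (simp add: dot3_def smult3_def algebra_simps)

lemma dot3_commute: "dot3 v w = dot3 w v"
  by (cases v; cases w) (simp add: dot3_def algebra_simps)

lemma dot3_lincomb3_right: "dot3 v (lincomb3 \<alpha> a \<beta> b) = \<alpha> * dot3 v a + \<beta> * dot3 v b"
  by (cases v; cases a; cases b) (simp add: dot3_def lincomb3_def algebra_simps)

lemma dot3_cross3_left: "dot3 v (cross3 v w) = 0"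
  by (cases v; cases w) (simp add: dot3_def cross3_def algebra_simps)

lemma dot3_cross3_right: "dot3 w (cross3 v w) = 0"
  by (cases v; cases w) (simp add: dot3_def cross3_def algebra_simps)

lemma smult3_eq_0_iff: "smult3 c v = (0,0,0) \<longleftrightarrow> c = 0 \<or> v = (0,0,0)"
  by (cases v) (auto simp: smult3_def)

lemma smult3_smult3: "smult3 c (smult3 d v) = smult3 (c * d) v"
  by (cases v) (simp add: smult3_def)

lemma smult3_lincomb3: "smult3 d (lincomb3 \<alpha> a \<beta> b) = lincomb3 (d * \<alpha>) a (d * \<beta>) b"
  by (cases a; cases b) (simp add: smult3_def lincomb3_def algebra_simps)

lemma lincomb3_eq_iff_coeffs_eq:
  assumes "\<forall>\<alpha> \<beta>. lincomb3 \<alpha> a \<beta> b = (0,0,0) \<longrightarrow> \<alpha> = 0 \<and> \<beta> = 0"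
  shows "lincomb3 \<alpha> a \<beta> b = lincomb3 \<alpha>' a \<beta>' b \<longleftrightarrow> \<alpha> = \<alpha>' \<and> \<beta> = \<beta>'"
proof
  assume "lincomb3 \<alpha> a \<beta> b = lincomb3 \<alpha>' a \<beta>' b"
  hence "lincomb3 (\<alpha> - \<alpha>') a (\<beta> - \<beta>') b = (0,0,0)"
    by (cases a; cases b) (auto simp: lincomb3_def algebra_simps)
  hence "\<alpha> - \<alpha>' = 0 \<and> \<beta> - \<beta>' = 0" using assms by blast
  thus "\<alpha> = \<alpha>' \<and> \<beta> = \<beta>'" by simp
qed simp

lemma proj_class_self: "v \<in> proj_class v"
  unfolding proj_class_def by (cases v) (auto simp: smult3_def intro!: exI[of _ 1])

lemma proj_class_smult3: "c \<noteq> 0 \<Longrightarrow> proj_class (smult3 c v) = proj_class v"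
  unfolding proj_class_def
proof (auto simp: smult3_smult3)
  fix d :: 'a assume "c \<noteq> 0" "d \<noteq> 0"
  thus "\<exists>e. smult3 d v = smult3 (e * c) v \<and> e \<noteq> 0"
    by (intro exI[of _ "d / c"]) auto
qed

lemma proj_class_eq_iff:
  assumes "v \<noteq> (0,0,0)"
  shows "proj_class v = proj_class v' \<longleftrightarrow> (\<exists>d. d \<noteq> 0 \<and> v' = smult3 d v)"
proof
  assume "proj_class v = proj_class v'"
  hence "v' \<in> proj_class v" using proj_class_self by metis
  thus "\<exists>d. d \<noteq> 0 \<and> v' = smult3 d v" unfolding proj_class_def by auto
qed (use proj_class_smult3 in metis)

lemma incident_proj_class_iff:
  "incident (proj_class v) (proj_class w) \<longleftrightarrow> dot3 v w = 0"
proof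
  assume "incident (proj_class v) (proj_class w)"
  then obtain c d where "c \<noteq> 0" "d \<noteq> 0" "dot3 (smult3 c v) (smult3 d w) = 0"
    unfolding incident_def proj_class_def by auto
  thus "dot3 v w = 0" by (simp add: dot3_smult3_left dot3_smult3_right)
next
  assume "dot3 v w = 0"
  thus "incident (proj_class v) (proj_class w)"
    unfolding incident_def using proj_class_self by blast
qed

lemma incident_commute: "incident P L = incident L P"
  unfolding incident_def by (metis dot3_commute)

text \<open>Lines are given by dual coordinates, so points and lines are literally the same objects;
  together with \<open>incident_commute\<close> this makes every statement dualisable.\<close>
lemma pg_lines_eq_pg_points: "pg_lines = pg_points"
  unfolding pg_lines_def pg_points_def ..

lemma pg_pointsE:
  assumes "P \<in> pg_points"
  obtains v where "v \<noteq> (0,0,0)" "P = proj_class v"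
  using assms that unfolding pg_points_def by blast

lemma pg_pointsI: "v \<noteq> (0,0,0) \<Longrightarrow> proj_class v \<in> pg_points"
  unfolding pg_points_def by blast

lemma cross3_eq_0_imp_parallel:
  assumes "cross3 v w = (0,0,0)" "v \<noteq> (0,0,0)"
  shows "\<exists>d. w = smult3 d v"
proof -
  obtain x1 y1 z1 where v: "v = (x1,y1,z1)" by (cases v) auto
  obtain x2 y2 z2 where w: "w = (x2,y2,z2)" by (cases w) auto
  have e: "y1*z2 = z1*y2" "z1*x2 = x1*z2" "x1*y2 = y1*x2"
    using assms(1) by (auto simp: cross3_def v w)
  consider "x1 \<noteq> 0" | "y1 \<noteq> 0" | "z1 \<noteq> 0" using assms(2) v by auto
  thus ?thesis
  proof cases
    case 1
    show ?thesis
      by (rule exI[of _ "x2/x1"]) (use 1 e in \<open>auto simp: v w smult3_def field_simps\<close>)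
  next
    case 2
    show ?thesis
      by (rule exI[of _ "y2/y1"]) (use 2 e in \<open>auto simp: v w smult3_def field_simps\<close>)
  next
    case 3
    show ?thesis
      by (rule exI[of _ "z2/z1"]) (use 3 e in \<open>auto simp: v w smult3_def field_simps\<close>)
  qed
qed

lemma cross3_cross3_eq_0:
  assumes "dot3 w v = 0" "dot3 w v' = 0"
  shows "cross3 (cross3 v v') w = (0,0,0)"
proof -
  obtain x1 y1 z1 where v: "v = (x1,y1,z1)" by (cases v) auto
  obtain x2 y2 z2 where v': "v' = (x2,y2,z2)" by (cases v') auto
  obtain a b c where w: "w = (a,b,c)" by (cases w) auto
  have e1: "a*x1 + b*y1 + c*z1 = 0" and e2: "a*x2 + b*y2 + c*z2 = 0"
    using assms by (auto simp: dot3_def v v' w)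
  have "(z1*x2 - x1*z2) * c - (x1*y2 - y1*x2) * b = x2 * (a*x1 + b*y1 + c*z1) - x1 * (a*x2 + b*y2 + c*z2)"
       "(x1*y2 - y1*x2) * a - (y1*z2 - z1*y2) * c = y2 * (a*x1 + b*y1 + c*z1) - y1 * (a*x2 + b*y2 + c*z2)"
       "(y1*z2 - z1*y2) * b - (z1*x2 - x1*z2) * a = z2 * (a*x1 + b*y1 + c*z1) - z1 * (a*x2 + b*y2 + c*z2)"
    by (simp_all add: algebra_simps)
  thus ?thesis using e1 e2 by (simp add: cross3_def v v' w)
qed

lemma cross3_neq_0:
  assumes "v \<noteq> (0,0,0)" "w \<noteq> (0,0,0)" "proj_class v \<noteq> proj_class w"
  shows "cross3 v w \<noteq> (0,0,0)"
proof
  assume "cross3 v w = (0,0,0)"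
  then obtain d where d: "w = smult3 d v" using cross3_eq_0_imp_parallel assms(1) by blast
  hence "d \<noteq> 0" using assms(2) by (auto simp: smult3_eq_0_iff)
  thus False using assms(3) d proj_class_smult3 by metis
qed

lemma join_exists:
  assumes "P \<in> pg_points" "P' \<in> pg_points" "P \<noteq> P'"
  shows "\<exists>L\<in>pg_points. incident P L \<and> incident P' L"
proof -
  obtain v where v: "v \<noteq> (0,0,0)" "P = proj_class v" using assms(1) by (rule pg_pointsE)
  obtain v' where v': "v' \<noteq> (0,0,0)" "P' = proj_class v'" using assms(2) by (rule pg_pointsE)
  have "cross3 v v' \<noteq> (0,0,0)" using cross3_neq_0 v v' assms(3) by blast
  hence "proj_class (cross3 v v') \<in> pg_points" by (rule pg_pointsI)
  moreover have "incident P (proj_class (cross3 v v'))" "incident P' (proj_class (cross3 v v'))"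
    using v v' by (simp_all add: incident_proj_class_iff dot3_cross3_left dot3_cross3_right)
  ultimately show ?thesis by blast
qed

lemma join_unique:
  assumes "P \<in> pg_points" "P' \<in> pg_points" "P \<noteq> P'" "L \<in> pg_points" "L' \<in> pg_points"
    "incident P L" "incident P' L" "incident P L'" "incident P' L'"
  shows "L = L'"
proof -
  obtain v where v: "v \<noteq> (0,0,0)" "P = proj_class v" using assms(1) by (rule pg_pointsE)
  obtain v' where v': "v' \<noteq> (0,0,0)" "P' = proj_class v'" using assms(2) by (rule pg_pointsE)
  obtain w where w: "w \<noteq> (0,0,0)" "L = proj_class w" using assms(4) by (rule pg_pointsE)
  obtain w' where w': "w' \<noteq> (0,0,0)" "L' = proj_class w'" using assms(5) by (rule pg_pointsE)
  have n: "cross3 v v' \<noteq> (0,0,0)" using cross3_neq_0 v v' assms(3) by blast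
  have "dot3 w v = 0" "dot3 w v' = 0" "dot3 w' v = 0" "dot3 w' v' = 0"
    using assms(6-9) v v' w w' by (simp_all add: incident_proj_class_iff dot3_commute)
  hence "cross3 (cross3 v v') w = (0,0,0)" "cross3 (cross3 v v') w' = (0,0,0)"
    by (simp_all add: cross3_cross3_eq_0)
  then obtain d d' where d: "w = smult3 d (cross3 v v')" and d': "w' = smult3 d' (cross3 v v')"
    using cross3_eq_0_imp_parallel n by blast
  have "d \<noteq> 0" "d' \<noteq> 0" using d d' w w' by (auto simp: smult3_eq_0_iff)
  thus ?thesis using d d' w w' proj_class_smult3 by metis
qed

lemma meet_exists:
  assumes "L \<in> pg_points" "L' \<in> pg_points" "L \<noteq> L'"
  shows "\<exists>P\<in>pg_points. incident P L \<and> incident P L'"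
  using join_exists[OF assms] incident_commute by metis

lemma meet_unique:
  assumes "L \<in> pg_points" "L' \<in> pg_points" "L \<noteq> L'" "P \<in> pg_points" "P' \<in> pg_points"
    "incident P L" "incident P L'" "incident P' L" "incident P' L'"
  shows "P = P'"
  using join_unique[of L L' P P'] assms incident_commute by metis

lemma exists_independent_orthogonal_pair:
  assumes "w \<noteq> (0,0,0)"
  obtains a b where "dot3 w a = 0" "dot3 w b = 0"
    "\<forall>\<alpha> \<beta>. lincomb3 \<alpha> a \<beta> b = (0,0,0) \<longrightarrow> \<alpha> = 0 \<and> \<beta> = 0"
proof -
  obtain w1 w2 w3 where w: "w = (w1,w2,w3)" by (cases w) auto
  consider "w1 \<noteq> 0" | "w2 \<noteq> 0" | "w3 \<noteq> 0" using assms w by auto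
  thus ?thesis
  proof cases
    case 1
    show ?thesis
      by (rule that[of "(-w2, w1, 0)" "(-w3, 0, w1)"]) (use 1 in \<open>auto simp: w dot3_def lincomb3_def algebra_simps\<close>)
  next
    case 2
    show ?thesis
      by (rule that[of "(w2, -w1, 0)" "(0, -w3, w2)"]) (use 2 in \<open>auto simp: w dot3_def lincomb3_def algebra_simps\<close>)
  next
    case 3
    show ?thesis
      by (rule that[of "(w3, 0, -w1)" "(0, w3, -w2)"]) (use 3 in \<open>auto simp: w dot3_def lincomb3_def algebra_simps\<close>)
  qed
qed

lemma proj_class_lincomb3_eq_imp_proportional:
  assumes indep: "\<forall>\<alpha> \<beta>. lincomb3 \<alpha> a \<beta> b = (0,0,0) \<longrightarrow> \<alpha> = 0 \<and> \<beta> = 0"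
    and "lincomb3 \<alpha> a \<beta> b \<noteq> (0,0,0)"
    and "proj_class (lincomb3 \<alpha> a \<beta> b) = proj_class (lincomb3 \<alpha>' a \<beta>' b)"
  shows "\<exists>d. \<alpha>' = d * \<alpha> \<and> \<beta>' = d * \<beta>"
proof -
  obtain d where "lincomb3 \<alpha>' a \<beta>' b = smult3 d (lincomb3 \<alpha> a \<beta> b)"
    using assms(2,3) proj_class_eq_iff by blast
  thus ?thesis by (auto simp: smult3_lincomb3 lincomb3_eq_iff_coeffs_eq[OF indep])
qed

text \<open>The points of the line \<open>w\<^sup>\<perp> = span {a, b}\<close> include \<open>\<langle>b\<rangle>\<close> and the \<open>q\<close> points
  \<open>\<langle>a + c b\<rangle>\<close>.\<close>
lemma card_points_on_line_ge:
  assumes "L \<in> pg_points"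
  shows "CARD('a) + 1 \<le> card {P\<in>pg_points. incident P (L::'a::{field,finite} vec3 set)}"
proof -
  obtain w where w: "w \<noteq> (0,0,0)" "L = proj_class w" using assms by (rule pg_pointsE)
  obtain a b where ab: "dot3 w a = 0" "dot3 w b = 0"
    and indep: "\<forall>\<alpha> \<beta>. lincomb3 \<alpha> a \<beta> b = (0,0,0) \<longrightarrow> \<alpha> = 0 \<and> \<beta> = 0"
    using exists_independent_orthogonal_pair[OF w(1)] by blast
  define coeffs :: "'a option \<Rightarrow> 'a \<times> 'a"
    where "coeffs ox = (case ox of None \<Rightarrow> (0, 1) | Some c \<Rightarrow> (1, c))" for ox
  define f where "f ox = proj_class (lincomb3 (fst (coeffs ox)) a (snd (coeffs ox)) b)" for ox
  have coeffs_nz: "coeffs ox \<noteq> (0, 0)" for ox by (cases ox) (simp_all add: coeffs_def)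
  have "inj f"
  proof (rule injI)
    fix x y assume "f x = f y"
    then obtain d where "fst (coeffs y) = d * fst (coeffs x)" "snd (coeffs y) = d * snd (coeffs x)"
      using proj_class_lincomb3_eq_imp_proportional[OF indep] indep coeffs_nz[of x]
      unfolding f_def by (metis prod.collapse)
    thus "x = y" by (cases x; cases y) (simp_all add: coeffs_def)
  qed
  moreover have "range f \<subseteq> {P\<in>pg_points. incident P L}"
  proof (clarify)
    fix ox
    obtain \<alpha> \<beta> where c: "coeffs ox = (\<alpha>, \<beta>)" by fastforce
    have "lincomb3 \<alpha> a \<beta> b \<noteq> (0,0,0)" using indep coeffs_nz[of ox] c by blast
    moreover have "dot3 (lincomb3 \<alpha> a \<beta> b) w = 0"
      using ab by (simp add: dot3_commute[of _ w] dot3_lincomb3_right)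
    ultimately show "f ox \<in> pg_points \<and> incident (f ox) L"
      by (simp add: f_def c w pg_pointsI incident_proj_class_iff)
  qed
  ultimately have "card (UNIV :: 'a option set) \<le> card {P\<in>pg_points. incident P L}"
    using card_mono[of _ "range f"] by (simp add: card_image)
  thus ?thesis by (simp add: card_UNIV_option)
qed

lemma card_points_on_line_minus_ge:
  assumes "L \<in> pg_points"
  shows "CARD('a) \<le> card ({P\<in>pg_points. incident P (L::'a::{field,finite} vec3 set)} - {X})"
  using card_points_on_line_ge[OF assms] card_Diff_singleton_if[of _ X] by fastforce

lemma card_lines_through_point_ge:
  assumes "P \<in> pg_points"
  shows "CARD('a) + 1 \<le> card {L\<in>pg_points. incident (P::'a::{field,finite} vec3 set) L}"
  using card_points_on_line_ge[OF assms] incident_commute[of _ P] by simp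

lemma exists_point_off_line:
  assumes "L \<in> pg_points" "h \<in> pg_points" "L \<noteq> h"
  shows "\<exists>P\<in>pg_points. incident P L \<and> \<not> incident P (h::'a::{field,finite} vec3 set)"
proof (rule ccontr)
  assume "\<not> ?thesis"
  hence on_h: "\<forall>P\<in>pg_points. incident P L \<longrightarrow> incident P h" by blast
  have "2 \<le> card {P\<in>pg_points. incident P L}"
    using card_points_on_line_ge[OF assms(1)] CARD_field_ge_2[where 'a='a] by linarith
  then obtain P P' where "P \<in> pg_points" "P' \<in> pg_points" "P \<noteq> P'" "incident P L" "incident P' L"
    by (auto simp: numeral_2_eq_2 card_le_Suc_iff)
  thus False using on_h join_unique[of P P' L h] assms by blast
qed

lemma exists_line_off_point:
  assumes "P \<in> pg_points" "u \<in> pg_points" "P \<noteq> u"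
  shows "\<exists>L\<in>pg_points. incident P L \<and> \<not> incident (u::'a::{field,finite} vec3 set) L"
  using exists_point_off_line[OF assms] incident_commute by metis

section \<open>Jamison's bound for affine blocking sets\<close>

lemma sum_UNIV2_eq_origin:
  fixes F :: "'a::{zero,finite} \<Rightarrow> 'b::{zero,finite} \<Rightarrow> 'c::comm_monoid_add"
  assumes "\<And>\<alpha> \<beta>. (\<alpha>, \<beta>) \<noteq> (0, 0) \<Longrightarrow> F \<alpha> \<beta> = 0"
  shows "(\<Sum>\<alpha>\<in>UNIV. \<Sum>\<beta>\<in>UNIV. F \<alpha> \<beta>) = F 0 0"
proof -
  have "(\<Sum>\<beta>\<in>UNIV. F \<alpha> \<beta>) = (if \<alpha> = 0 then F 0 0 else 0)" for \<alpha>
    using sum.remove[of UNIV 0 "F \<alpha>"] assms by (auto intro!: sum.neutral)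
  thus ?thesis by (simp add: sum.delta)
qed

text \<open>With \<open>e\<^sub>1, e\<^sub>2\<close> spanning \<open>v\<^sub>0\<^sup>\<perp>\<close>, the vectors \<open>w\<^sub>0 + \<alpha> e\<^sub>1 + \<beta> e\<^sub>2\<close> represent the \<open>q\<^sup>2\<close>
  lines missing \<open>\<langle>v\<^sub>0\<rangle>\<close>, and only the origin gives back \<open>\<langle>w\<^sub>0\<rangle>\<close>.\<close>
lemma exists_affine_chart:
  assumes "v0 \<noteq> (0,0,0)" "dot3 v0 w0 \<noteq> 0"
  obtains e1 e2 where "\<And>\<alpha> \<beta>. dot3 v0 (lincomb3 1 w0 1 (lincomb3 \<alpha> e1 \<beta> e2)) = dot3 v0 w0"
    "\<And>\<alpha> \<beta>. (\<alpha>, \<beta>) \<noteq> (0, 0) \<Longrightarrow>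
      proj_class (lincomb3 1 w0 1 (lincomb3 \<alpha> e1 \<beta> e2)) \<noteq> proj_class w0"
proof -
  obtain e1 e2 where e: "dot3 v0 e1 = 0" "dot3 v0 e2 = 0"
    and indep: "\<forall>\<alpha> \<beta>. lincomb3 \<alpha> e1 \<beta> e2 = (0,0,0) \<longrightarrow> \<alpha> = 0 \<and> \<beta> = 0"
    using exists_independent_orthogonal_pair[OF assms(1)] by blast
  have v0_chart: "dot3 v0 (lincomb3 1 w0 1 (lincomb3 \<alpha> e1 \<beta> e2)) = dot3 v0 w0" for \<alpha> \<beta>
    using e by (simp add: dot3_lincomb3_right)
  have "w0 \<noteq> (0,0,0)" using assms(2) by (auto simp: dot3_def)
  moreover have "proj_class (lincomb3 1 w0 1 (lincomb3 \<alpha> e1 \<beta> e2)) \<noteq> proj_class w0"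
    if nz: "(\<alpha>, \<beta>) \<noteq> (0, 0)" and w0: "w0 \<noteq> (0,0,0)" for \<alpha> \<beta>
  proof
    assume "proj_class (lincomb3 1 w0 1 (lincomb3 \<alpha> e1 \<beta> e2)) = proj_class w0"
    then obtain d where d: "lincomb3 1 w0 1 (lincomb3 \<alpha> e1 \<beta> e2) = smult3 d w0"
      using w0 proj_class_eq_iff by metis
    hence "d = 1" using v0_chart[of \<alpha> \<beta>] assms(2) by (simp add: dot3_smult3_right)
    hence "lincomb3 \<alpha> e1 \<beta> e2 = (0,0,0)" using d
      by (cases w0; cases "lincomb3 \<alpha> e1 \<beta> e2") (simp add: lincomb3_def smult3_def)
    thus False using indep nz by blast
  qed
  ultimately show ?thesis using that v0_chart by blast
qed

text \<open>Fix \<open>P\<^sub>0 \<in> B\<close>; the product over \<open>B - {P\<^sub>0}\<close> of the affine forms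
  \<open>(\<alpha>, \<beta>) \<mapsto> v \<bullet> (w\<^sub>0 + \<alpha> e\<^sub>1 + \<beta> e\<^sub>2)\<close> vanishes exactly off the origin, so its sum over
  the plane is nonzero, which forces \<open>|B| - 1 \<ge> 2 (q - 1)\<close>.\<close>
theorem card_affine_blocking_set_ge:
  assumes h: "h \<in> pg_points" and B: "B \<subseteq> pg_points"
    and off_h: "\<forall>P\<in>B. \<not> incident P h"
    and blocks: "\<forall>L\<in>pg_points. L \<noteq> h \<longrightarrow> (\<exists>P\<in>B. incident P L)"
  shows "2 * CARD('a) - 1 \<le> card (B :: 'a::{field,finite} vec3 set set)"
proof (rule ccontr)
  assume small: "\<not> ?thesis"
  obtain w0 where w0: "w0 \<noteq> (0,0,0)" "h = proj_class w0" using h by (rule pg_pointsE)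
  have "\<not> {P\<in>pg_points. incident P h} \<subseteq> {h}"
    using card_points_on_line_ge[OF h] card_mono[of "{h}" "{P\<in>pg_points. incident P h}"]
      CARD_field_ge_2[where 'a='a] by force
  then obtain P0 where P0: "P0 \<in> B" using blocks by blast
  obtain v0 where v0: "v0 \<noteq> (0,0,0)" "P0 = proj_class v0" using P0 B by (meson pg_pointsE subsetD)
  have v0w0: "dot3 v0 w0 \<noteq> 0" using off_h P0 v0 w0 incident_proj_class_iff by metis
  obtain e1 e2 where v0_chart: "\<And>\<alpha> \<beta>. dot3 v0 (lincomb3 1 w0 1 (lincomb3 \<alpha> e1 \<beta> e2)) = dot3 v0 w0"
    and chart_neq_h: "\<And>\<alpha> \<beta>. (\<alpha>, \<beta>) \<noteq> (0, 0) \<Longrightarrow> proj_class (lincomb3 1 w0 1 (lincomb3 \<alpha> e1 \<beta> e2)) \<noteq> h"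
    using exists_affine_chart[OF v0(1) v0w0] w0(2) by metis
  define chart where "chart \<alpha> \<beta> = lincomb3 1 w0 1 (lincomb3 \<alpha> e1 \<beta> e2)" for \<alpha> \<beta>
  have chart_nz: "chart \<alpha> \<beta> \<noteq> (0,0,0)" for \<alpha> \<beta>
    using v0_chart[of \<alpha> \<beta>] v0w0 by (auto simp: chart_def dot3_def)
  have "\<forall>P\<in>B. \<exists>v. v \<noteq> (0,0,0) \<and> P = proj_class v" using B by (blast elim: pg_pointsE)
  then obtain rep where rep: "\<And>P. P \<in> B \<Longrightarrow> rep P \<noteq> (0,0,0) \<and> P = proj_class (rep P)" by metis
  define F where "F \<alpha> \<beta> = (\<Prod>P\<in>B - {P0}. dot3 (rep P) (chart \<alpha> \<beta>))" for \<alpha> \<beta>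
  have "F \<alpha> \<beta> = 0" if nz: "(\<alpha>, \<beta>) \<noteq> (0, 0)" for \<alpha> \<beta>
  proof -
    obtain P where P: "P \<in> B" "incident P (proj_class (chart \<alpha> \<beta>))"
      using blocks chart_neq_h[OF nz] pg_pointsI[OF chart_nz] unfolding chart_def by blast
    moreover have "P \<noteq> P0" using P v0 v0_chart v0w0 by (auto simp: chart_def incident_proj_class_iff)
    ultimately show ?thesis
      unfolding F_def using rep by (metis DiffI finite incident_proj_class_iff prod_zero singletonD)
  qed
  hence "(\<Sum>\<alpha>\<in>UNIV. \<Sum>\<beta>\<in>UNIV. F \<alpha> \<beta>) = F 0 0" by (rule sum_UNIV2_eq_origin)
  moreover have "F 0 0 \<noteq> 0"
  proof -
    have "dot3 (rep P) w0 \<noteq> 0" if "P \<in> B" for P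
      using off_h rep[OF that] w0 that incident_proj_class_iff by metis
    thus ?thesis by (simp add: F_def chart_def lincomb3_def)
  qed
  moreover have "card (B - {P0}) < 2 * (CARD('a) - 1)"
    using small P0 CARD_field_ge_2[where 'a='a] by (simp add: card_Diff_singleton)
  ultimately show False
    using sum_UNIV2_prod_affine_eq_0[of "B - {P0}" "\<lambda>P. dot3 (rep P) w0"]
    unfolding F_def chart_def dot3_lincomb3_right by (auto simp: add.assoc)
qed

section \<open>Covering a balanced colouring by pairs\<close>

definition colour_balanced :: "'s set \<Rightarrow> ('s \<Rightarrow> 'c) \<Rightarrow> bool" where
  "colour_balanced S g \<longleftrightarrow> (\<forall>c. 2 * card {s\<in>S. g s = c} \<le> card S + 1)"

text \<open>Removing one element from each of the two largest colour classes keeps the colouring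
  balanced: a third class \<open>k\<^sub>3 \<le> k\<^sub>2 \<le> k\<^sub>1\<close> satisfies \<open>2 k\<^sub>3 \<le> k\<^sub>2 + k\<^sub>3 \<le> |S| - k\<^sub>1\<close>.\<close>
lemma colour_balanced_Diff_two_largest:
  assumes fin: "finite S" and bal: "colour_balanced S g"
    and s1: "s1 \<in> S" "\<forall>s\<in>S. card {x\<in>S. g x = g s} \<le> card {x\<in>S. g x = g s1}"
    and s2: "s2 \<in> S" "g s2 \<noteq> g s1"
      "\<forall>s\<in>S. g s \<noteq> g s1 \<longrightarrow> card {x\<in>S. g x = g s} \<le> card {x\<in>S. g x = g s2}"
  shows "colour_balanced (S - {s1, s2}) g"
  unfolding colour_balanced_def
proof
  fix c
  let ?k = "\<lambda>c. card {x\<in>S. g x = c}"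
  have "s1 \<noteq> s2" using s2(2) by blast
  hence card_S': "card (S - {s1, s2}) = card S - 2"
    using s1(1) s2(1) fin by (simp add: card_Diff_subset)
  show "2 * card {s\<in>S - {s1, s2}. g s = c} \<le> card (S - {s1, s2}) + 1"
  proof (cases "c = g s1 \<or> c = g s2")
    case True
    then obtain s0 where s0: "s0 \<in> S" "s0 \<in> {s1, s2}" "c = g s0" using s1 s2 by auto
    have "{s\<in>S - {s1, s2}. g s = c} \<subseteq> {x\<in>S. g x = g s0} - {s0}" using s0 by auto
    hence "card {s\<in>S - {s1, s2}. g s = c} \<le> ?k (g s0) - 1"
      using fin s0 card_mono[of "{x\<in>S. g x = g s0} - {s0}"] by (simp add: card_Diff_singleton)
    moreover have "1 \<le> ?k (g s0)" "2 * ?k (g s0) \<le> card S + 1"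
      using fin s0 bal by (auto simp: colour_balanced_def Suc_le_eq card_gt_0_iff)
    ultimately show ?thesis using card_S' s1(1) s2(1,2) card_mono[of S "{s1, s2}"] fin by auto
  next
    case False
    show ?thesis
    proof (cases "\<exists>s3\<in>S. g s3 = c")
      case True
      then obtain s3 where s3: "s3 \<in> S" "g s3 = c" by blast
      have "?k c \<le> ?k (g s2)" "?k (g s2) \<le> ?k (g s1)" using s1 s2 s3 False by auto
      moreover have "?k (g s1) + ?k (g s2) + ?k c \<le> card S"
      proof -
        let ?C = "\<lambda>c. {x\<in>S. g x = c}"
        have "card (?C (g s1) \<union> ?C (g s2) \<union> ?C c) = ?k (g s1) + ?k (g s2) + ?k c"
          using fin s2(2) False by (subst card_Un_disjoint, auto)+
        moreover have "card (?C (g s1) \<union> ?C (g s2) \<union> ?C c) \<le> card S"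
          using fin by (intro card_mono) auto
        ultimately show ?thesis by simp
      qed
      moreover have "1 \<le> ?k (g s1)" using fin s1(1) by (auto simp: Suc_le_eq card_gt_0_iff)
      moreover have "card {s\<in>S - {s1, s2}. g s = c} \<le> ?k c" using fin by (intro card_mono) auto
      ultimately show ?thesis using card_S' by linarith
    next
      case False
      hence "{s\<in>S - {s1, s2}. g s = c} = {}" by auto
      thus ?thesis by (metis card.empty le0 mult_0_right)
    qed
  qed
qed

lemma exists_pair_cover:
  fixes S :: "'s set" and g :: "'s \<Rightarrow> 'c" and R :: "'p \<Rightarrow> 's \<Rightarrow> bool"
  assumes "finite S" "colour_balanced S g"
    and "\<And>s1 s2. s1 \<in> S \<Longrightarrow> s2 \<in> S \<Longrightarrow> g s1 \<noteq> g s2 \<Longrightarrow> \<exists>p. R p s1 \<and> R p s2"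
    and "\<And>s. s \<in> S \<Longrightarrow> \<exists>p. R p s"
  shows "\<exists>T. finite T \<and> 2 * card T \<le> card S + 1 \<and> (\<forall>p\<in>T. \<exists>s\<in>S. R p s) \<and> (\<forall>s\<in>S. \<exists>p\<in>T. R p s)"
  using assms
proof (induction "card S" arbitrary: S rule: less_induct)
  case less
  note fin = less.prems(1) and bal = less.prems(2) and pair = less.prems(3) and single = less.prems(4)
  let ?k = "\<lambda>s. card {x\<in>S. g x = g s}"
  show ?case
  proof (cases "card S \<le> 1")
    case True
    obtain p where p: "\<And>s. s \<in> S \<Longrightarrow> R (p s) s" using single by metis
    have "2 * card (p ` S) \<le> card S + 1" using True card_image_le[OF fin, of p] by linarith
    thus ?thesis using fin p by (intro exI[of _ "p ` S"]) auto
  next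
    case False
    obtain s1 where s1: "s1 \<in> S" "?k s1 = Max (?k ` S)"
      using Max_in[of "?k ` S"] fin False by fastforce
    have s1_max: "\<forall>s\<in>S. ?k s \<le> ?k s1" using s1(2) fin by simp
    define S2 where "S2 = {s\<in>S. g s \<noteq> g s1}"
    have "S2 \<noteq> {}"
    proof
      assume "S2 = {}"
      hence "{x\<in>S. g x = g s1} = S" unfolding S2_def by auto
      thus False using bal False unfolding colour_balanced_def by (metis mult_2 add_le_cancel_left)
    qed
    then obtain s2 where s2: "s2 \<in> S2" "?k s2 = Max (?k ` S2)"
      using Max_in[of "?k ` S2"] fin unfolding S2_def by fastforce
    have s2_max: "\<forall>s\<in>S2. ?k s \<le> ?k s2" using s2(2) fin unfolding S2_def by simp
    obtain p where p: "R p s1" "R p s2" using pair s1(1) s2(1) unfolding S2_def by force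
    have card_less: "card (S - {s1, s2}) < card S"
      using fin s1(1) s2(1) unfolding S2_def by (intro psubset_card_mono) auto
    have "colour_balanced (S - {s1, s2}) g"
      using colour_balanced_Diff_two_largest[OF fin bal s1(1) s1_max] s2 s2_max
      unfolding S2_def by blast
    then obtain T where T: "finite T" "2 * card T \<le> card (S - {s1, s2}) + 1"
      "\<forall>p\<in>T. \<exists>s\<in>S - {s1, s2}. R p s" "\<forall>s\<in>S - {s1, s2}. \<exists>p\<in>T. R p s"
      using less.hyps[OF card_less] fin pair single by (metis (no_types, lifting) DiffD1 finite_Diff)
    have "s1 \<noteq> s2" using s2(1) unfolding S2_def by blast
    hence "card (S - {s1, s2}) = card S - 2"
      using fin s1(1) s2(1) unfolding S2_def by (simp add: card_Diff_subset)
    moreover have "card (insert p T) \<le> card T + 1" using T(1) by (simp add: card_insert_if)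
    ultimately have "2 * card (insert p T) \<le> card S + 1" using T(2) False by linarith
    thus ?thesis using T p s1(1) s2(1) unfolding S2_def by (intro exI[of _ "insert p T"]) auto
  qed
qed

section \<open>Small non-primal dominating sets\<close>

lemma card_filter_split: "finite A \<Longrightarrow> card A = card {x\<in>A. P x} + card {x\<in>A. \<not> P x}"
proof -
  assume "finite A"
  hence "card ({x\<in>A. P x} \<union> {x\<in>A. \<not> P x}) = card {x\<in>A. P x} + card {x\<in>A. \<not> P x}"
    by (intro card_Un_disjoint) auto
  moreover have "{x\<in>A. P x} \<union> {x\<in>A. \<not> P x} = A" by blast
  ultimately show ?thesis by metis
qed

definition lines_avoiding :: "'a::field vec3 set set \<Rightarrow> 'a vec3 set set" where
  "lines_avoiding B = {L\<in>pg_points. \<forall>P\<in>B. \<not> incident P L}"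

lemma nonprimal_card_lines_through_lt:
  fixes PD LD :: "'a::{field,finite} vec3 set set"
  assumes "\<not> primal CARD('a) PD LD" "P \<in> pg_points"
  shows "card {L\<in>LD. incident P L} < CARD('a)"
proof (rule ccontr)
  assume "\<not> ?thesis"
  hence "CARD('a) \<le> card {L\<in>LD. incident P L}" by simp
  then obtain S where S: "S \<subseteq> {L\<in>LD. incident P L}" "card S = CARD('a)"
    by (rule obtain_subset_with_card_n)
  have "primal CARD('a) PD LD"
    unfolding primal_def by (intro disjI1 exI[of _ S]) (use S assms(2) in auto)
  thus False using assms(1) by blast
qed

lemma nonprimal_card_points_on_lt:
  fixes PD LD :: "'a::{field,finite} vec3 set set"
  assumes "\<not> primal CARD('a) PD LD" "L \<in> pg_points"
  shows "card {P\<in>PD. incident P L} < CARD('a)"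
proof (rule ccontr)
  assume "\<not> ?thesis"
  hence "CARD('a) \<le> card {P\<in>PD. incident P L}" by simp
  then obtain S where S: "S \<subseteq> {P\<in>PD. incident P L}" "card S = CARD('a)"
    by (rule obtain_subset_with_card_n)
  have "primal CARD('a) PD LD" unfolding primal_def pg_lines_eq_pg_points
    by (intro disjI2 exI[of _ S]) (use S assms(2) in auto)
  thus False using assms(1) by blast
qed

lemma affine_blocking_bound:
  fixes B T :: "'a::{field,finite} vec3 set set"
  assumes "B \<subseteq> pg_points" "h \<in> lines_avoiding B" "T \<subseteq> pg_points" "\<forall>p\<in>T. \<not> incident p h"
    "\<forall>L\<in>lines_avoiding B - {h}. \<exists>p\<in>T. incident p L"
  shows "2 * CARD('a) - 1 \<le> card B + card T"
proof -
  have "2 * CARD('a) - 1 \<le> card (B \<union> T)"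
    by (rule card_affine_blocking_set_ge) (use assms in \<open>auto simp: lines_avoiding_def\<close>)
  thus ?thesis using card_Un_le[of B T] by linarith
qed

lemma card_lines_avoiding_ge:
  fixes B :: "'a::{field,finite} vec3 set set"
  assumes "B \<subseteq> pg_points" "h \<in> lines_avoiding B"
  shows "2 * CARD('a) \<le> card B + card (lines_avoiding B)"
proof -
  have "\<forall>L\<in>lines_avoiding B - {h}. \<exists>p\<in>pg_points. incident p L \<and> \<not> incident p h"
    using assms(2) by (auto simp: lines_avoiding_def intro!: exists_point_off_line)
  then obtain pt where pt: "\<forall>L\<in>lines_avoiding B - {h}.
      pt L \<in> pg_points \<and> incident (pt L) L \<and> \<not> incident (pt L) h"
    by metis
  have "2 * CARD('a) - 1 \<le> card B + card (pt ` (lines_avoiding B - {h}))"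
    by (rule affine_blocking_bound[OF assms]) (use pt in auto)
  moreover have "card (pt ` (lines_avoiding B - {h})) \<le> card (lines_avoiding B) - 1"
    using card_image_le[of "lines_avoiding B - {h}" pt] assms(2) by (simp add: card_Diff_singleton)
  moreover have "1 \<le> card (lines_avoiding B)" using assms(2) by (auto simp: Suc_le_eq card_gt_0_iff)
  ultimately show ?thesis using CARD_field_ge_2[where 'a='a] by linarith
qed

lemma colour_balanced_by_meet:
  fixes M :: "'a::{field,finite} vec3 set set"
  assumes h: "h \<in> M"
    and meet: "\<And>L. L \<in> M - {h} \<Longrightarrow>
      meet L \<in> pg_points \<and> incident (meet L) L \<and> incident (meet L) h"
    and light: "\<forall>P\<in>pg_points. incident P h \<longrightarrow> 2 * card {L\<in>M - {h}. incident P L} \<le> card M"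
  shows "colour_balanced (M - {h}) meet"
  unfolding colour_balanced_def
proof
  fix c
  have "0 < card M" using h by (auto simp: card_gt_0_iff)
  hence card_M: "card (M - {h}) + 1 = card M" using h by (simp add: card_Diff_singleton)
  show "2 * card {L\<in>M - {h}. meet L = c} \<le> card (M - {h}) + 1"
  proof (cases "\<exists>L\<in>M - {h}. meet L = c")
    case True
    hence "c \<in> pg_points" "incident c h" using meet by auto
    hence "2 * card {L\<in>M - {h}. incident c L} \<le> card M" using light by blast
    moreover have "card {L\<in>M - {h}. meet L = c} \<le> card {L\<in>M - {h}. incident c L}"
      using meet by (intro card_mono) auto
    ultimately show ?thesis using card_M by linarith
  next
    case False
    hence "{L\<in>M - {h}. meet L = c} = {}" by blast
    thus ?thesis by (metis card.empty le0 mult_0_right)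
  qed
qed

text \<open>If no point of \<open>h\<close> lies on more than half of the lines of \<open>M\<close>, the other lines of \<open>M\<close>
  can be paired up so that the two lines of each pair meet off \<open>h\<close>.\<close>
lemma exists_light_cover:
  fixes M :: "'a::{field,finite} vec3 set set"
  assumes M: "M \<subseteq> pg_points" "h \<in> M"
    and light: "\<forall>P\<in>pg_points. incident P h \<longrightarrow> 2 * card {L\<in>M - {h}. incident P L} \<le> card M"
  obtains T where "T \<subseteq> pg_points" "\<forall>p\<in>T. \<not> incident p h" "\<forall>L\<in>M - {h}. \<exists>p\<in>T. incident p L"
    "2 * card T \<le> card M"
proof -
  have "\<forall>L\<in>M - {h}. \<exists>P\<in>pg_points. incident P L \<and> incident P h"
    using M by (auto intro!: meet_exists)
  then obtain meet where meet: "\<And>L. L \<in> M - {h} \<Longrightarrow>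
      meet L \<in> pg_points \<and> incident (meet L) L \<and> incident (meet L) h"
    by metis
  define R where "R p L \<longleftrightarrow> p \<in> pg_points \<and> incident p L \<and> \<not> incident p h" for p L
  have "0 < card M" using M(2) by (auto simp: card_gt_0_iff)
  hence card_M: "card (M - {h}) + 1 = card M" using M(2) by (simp add: card_Diff_singleton)
  have "colour_balanced (M - {h}) meet"
    using colour_balanced_by_meet[OF M(2) meet light] .
  moreover have "\<exists>p. R p L1 \<and> R p L2"
    if L: "L1 \<in> M - {h}" "L2 \<in> M - {h}" "meet L1 \<noteq> meet L2" for L1 L2
  proof -
    have "L1 \<noteq> L2" using L(3) by blast
    then obtain p where p: "p \<in> pg_points" "incident p L1" "incident p L2"
      using meet_exists[of L1 L2] L(1,2) M(1) by blast
    have "\<not> incident p h"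
    proof
      assume "incident p h"
      hence "p = meet L1" "p = meet L2"
        using meet_unique[of L1 h p "meet L1"] meet_unique[of L2 h p "meet L2"] meet[OF L(1)]
          meet[OF L(2)] L(1,2) M p by auto
      thus False using L(3) by simp
    qed
    thus ?thesis using p R_def by blast
  qed
  moreover have "\<exists>p. R p L" if "L \<in> M - {h}" for L
    using exists_point_off_line[of L h] that M unfolding R_def by blast
  ultimately obtain T where T: "2 * card T \<le> card (M - {h}) + 1" "\<forall>p\<in>T. \<exists>L\<in>M - {h}. R p L"
      "\<forall>L\<in>M - {h}. \<exists>p\<in>T. R p L"
    using exists_pair_cover[of "M - {h}" meet R] by auto
  show thesis
  proof (rule that[of T])
    show "T \<subseteq> pg_points" "\<forall>p\<in>T. \<not> incident p h" using T(2) unfolding R_def by auto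
    show "\<forall>L\<in>M - {h}. \<exists>p\<in>T. incident p L" using T(3) unfolding R_def by blast
    show "2 * card T \<le> card M" using T(1) card_M by simp
  qed
qed

lemma concurrent_if_heavy:
  fixes M :: "'a::{field,finite} vec3 set set"
  assumes M: "M \<subseteq> pg_points" "l0 \<in> M"
    and heavy: "\<forall>h\<in>M. \<exists>P\<in>pg_points. incident P h \<and> card M < 2 * card {L\<in>M - {h}. incident P L}"
  shows "\<exists>Q\<in>pg_points. \<forall>h\<in>M. incident Q h"
proof -
  have heavy_card: "card M + 3 \<le> 2 * card {L\<in>M. incident P L}"
    if "h \<in> M" "incident P h" "card M < 2 * card {L\<in>M - {h}. incident P L}" for P h
  proof -
    have "{L\<in>M - {h}. incident P L} = {L\<in>M. incident P L} - {h}" by auto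
    thus ?thesis using that by (simp add: card_Diff_singleton)
  qed
  obtain Q where Q: "Q \<in> pg_points" "incident Q l0" "card M < 2 * card {L\<in>M - {l0}. incident Q L}"
    using heavy M(2) by blast
  have "incident Q h" if h: "h \<in> M" for h
  proof (rule ccontr)
    assume "\<not> incident Q h"
    obtain P where P: "P \<in> pg_points" "incident P h" "card M < 2 * card {L\<in>M - {h}. incident P L}"
      using heavy h by blast
    have "P \<noteq> Q" using P(2) \<open>\<not> incident Q h\<close> by blast
    hence "card ({L\<in>M. incident P L} \<inter> {L\<in>M. incident Q L}) \<le> 1"
      using join_unique[OF P(1) Q(1)] M(1) by (auto simp: card_le_Suc0_iff_eq)
    moreover have "card ({L\<in>M. incident P L} \<union> {L\<in>M. incident Q L}) \<le> card M"
      by (intro card_mono) auto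
    moreover have "card M + 3 \<le> 2 * card {L\<in>M. incident P L}" "card M + 3 \<le> 2 * card {L\<in>M. incident Q L}"
      using heavy_card[OF h P(2,3)] heavy_card[OF M(2) Q(2,3)] by simp_all
    moreover have "card {L\<in>M. incident P L} + card {L\<in>M. incident Q L} =
        card ({L\<in>M. incident P L} \<union> {L\<in>M. incident Q L}) + card ({L\<in>M. incident P L} \<inter> {L\<in>M. incident Q L})"
      by (rule card_Un_Int) simp_all
    ultimately show False by linarith
  qed
  thus ?thesis using Q(1) by blast
qed

lemma dominatingD:
  assumes "dominating PD LD"
  shows "PD \<subseteq> pg_points" "LD \<subseteq> pg_points"
    "\<And>P. P \<in> pg_points \<Longrightarrow> P \<notin> PD \<Longrightarrow> \<exists>L\<in>LD. incident P L"
    "\<And>L. L \<in> pg_points \<Longrightarrow> L \<notin> LD \<Longrightarrow> \<exists>P\<in>PD. incident P L"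
  using assms unfolding dominating_def pg_lines_eq_pg_points by blast+

text \<open>Every point of \<open>\<rho> \<notin> LD\<close> outside \<open>PD \<union> {Q}\<close> lies on its own line of \<open>LD\<close>, and that
  line misses \<open>Q\<close>.\<close>
lemma card_dominated_line_bound:
  fixes PD LD :: "'a::{field,finite} vec3 set set"
  assumes dom: "dominating PD LD"
    and \<rho>: "\<rho> \<in> pg_points" "\<rho> \<notin> LD" and Q: "Q \<in> pg_points" "incident Q \<rho>"
  shows "CARD('a) \<le> card {L\<in>LD. \<not> incident Q L} + card {P\<in>PD. incident P \<rho>}"
proof -
  define Z where "Z = {P\<in>pg_points. incident P \<rho>} - {Q} - PD"
  have "\<forall>P\<in>Z. \<exists>L\<in>LD. incident P L" using dominatingD(3)[OF dom] unfolding Z_def by blast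
  then obtain cover where cover: "\<And>P. P \<in> Z \<Longrightarrow> cover P \<in> LD \<and> incident P (cover P)" by metis
  have cover_eq_\<rho>: "cover P = \<rho>" if P: "P \<in> Z" and P': "P' \<in> pg_points" "P' \<noteq> P"
    "incident P' \<rho>" "incident P' (cover P)" for P P'
  proof -
    have "P \<in> pg_points" "incident P \<rho>" using P unfolding Z_def by auto
    moreover have "cover P \<in> pg_points" "incident P (cover P)"
      using cover[OF P] dominatingD(2)[OF dom] by auto
    ultimately show ?thesis using join_unique[of P P' "cover P" \<rho>] P' \<rho>(1) by auto
  qed
  have "inj_on cover Z"
  proof (rule inj_onI)
    fix P P' assume P: "P \<in> Z" "P' \<in> Z" "cover P = cover P'"
    show "P = P'"
    proof (rule ccontr)
      assume "P \<noteq> P'"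
      hence "cover P = \<rho>"
        using cover_eq_\<rho>[OF P(1), of P'] cover[OF P(2)] P(2,3) unfolding Z_def by auto
      thus False using cover[OF P(1)] \<rho>(2) by auto
    qed
  qed
  moreover have "cover ` Z \<subseteq> {L\<in>LD. \<not> incident Q L}"
  proof clarify
    fix P assume P: "P \<in> Z"
    have "\<not> incident Q (cover P)"
      using cover_eq_\<rho>[OF P Q(1)] cover[OF P] \<rho>(2) Q(2) P unfolding Z_def by auto
    thus "cover P \<in> LD \<and> \<not> incident Q (cover P)" using cover[OF P] by blast
  qed
  ultimately have "card Z \<le> card {L\<in>LD. \<not> incident Q L}" by (rule card_inj_on_le) simp
  moreover have "card ({P\<in>pg_points. incident P \<rho>} - {Q}) \<le> card (Z \<union> {P\<in>PD. incident P \<rho>})"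
    unfolding Z_def by (intro card_mono) auto
  ultimately show ?thesis
    using card_points_on_line_minus_ge[OF \<rho>(1), of Q] card_Un_le[of Z "{P\<in>PD. incident P \<rho>}"]
    by linarith
qed

text \<open>Projection from \<open>u\<close> onto \<open>m\<close>: every point \<open>v \<notin> PD\<close> of \<open>m\<close> off \<open>\<rho>\<close> sees from \<open>u\<close> its
  own point of \<open>PD\<close>, which lies neither on \<open>\<rho>\<close> nor on \<open>m\<close>.\<close>
lemma card_projection_le:
  fixes PD :: "'a::{field,finite} vec3 set set"
  assumes PD: "PD \<subseteq> pg_points" and u: "u \<in> pg_points" "u \<notin> PD" "incident u \<rho>" "\<not> incident u m"
    and lines: "\<rho> \<in> pg_points" "m \<in> pg_points"
    and through_u: "\<And>L. L \<in> pg_points \<Longrightarrow> incident u L \<Longrightarrow> L \<noteq> \<rho> \<Longrightarrow> \<exists>P\<in>PD. incident P L"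
  shows "card {v\<in>pg_points. incident v m \<and> \<not> incident v \<rho> \<and> v \<notin> PD}
    \<le> card {P\<in>PD. \<not> incident P \<rho> \<and> \<not> incident P m}"
proof -
  define V where "V = {v\<in>pg_points. incident v m \<and> \<not> incident v \<rho> \<and> v \<notin> PD}"
  have "\<exists>z. z \<in> PD \<and> (\<exists>L\<in>pg_points. incident u L \<and> incident v L \<and> incident z L \<and> L \<noteq> \<rho>)"
    if v: "v \<in> V" for v
  proof -
    have "u \<noteq> v" using u(4) v unfolding V_def by blast
    then obtain L where L: "L \<in> pg_points" "incident u L" "incident v L"
      using join_exists[OF u(1)] v unfolding V_def by blast
    moreover have "L \<noteq> \<rho>" using L(3) v unfolding V_def by blast
    ultimately show ?thesis using through_u by blast
  qed
  then obtain z where z: "\<And>v. v \<in> V \<Longrightarrow> z v \<in> PD \<and>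
      (\<exists>L\<in>pg_points. incident u L \<and> incident v L \<and> incident (z v) L \<and> L \<noteq> \<rho>)"
    by metis
  have z_off: "\<not> incident (z v) \<rho> \<and> \<not> incident (z v) m" if v: "v \<in> V" for v
  proof -
    obtain L where L: "L \<in> pg_points" "incident u L" "incident v L" "incident (z v) L" "L \<noteq> \<rho>"
      using z[OF v] by blast
    have zv: "z v \<in> pg_points" "z v \<noteq> u" "z v \<noteq> v" using z[OF v] v PD u(2) unfolding V_def by auto
    have "L \<noteq> m" using L(2) u(4) by blast
    have "\<not> incident (z v) \<rho>"
      using join_unique[OF zv(1) u(1) zv(2) L(1) lines(1) L(4,2) _ u(3)] L(5) by blast
    moreover have "\<not> incident (z v) m"
      using meet_unique[OF L(1) lines(2) \<open>L \<noteq> m\<close> zv(1) _ L(4) _ L(3)] v zv(3) unfolding V_def by blast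
    ultimately show ?thesis ..
  qed
  have "inj_on z V"
  proof (rule inj_onI)
    fix v v' assume v: "v \<in> V" "v' \<in> V" "z v = z v'"
    obtain L where L: "L \<in> pg_points" "incident u L" "incident v L" "incident (z v) L"
      using z[OF v(1)] by blast
    obtain L' where L': "L' \<in> pg_points" "incident u L'" "incident v' L'" "incident (z v) L'"
      using z[OF v(2)] v(3) by auto
    have zv: "z v \<in> pg_points" "z v \<noteq> u" using z[OF v(1)] PD u(2) by auto
    have "L = L'" using join_unique[OF zv(1) u(1) zv(2) L(1) L'(1) L(4,2) L'(4,2)] .
    moreover have "L \<noteq> m" using L(2) u(4) by blast
    ultimately show "v = v'"
      using meet_unique[OF L(1) lines(2)] v L(3) L'(3) unfolding V_def by blast
  qed
  moreover have "z ` V \<subseteq> {P\<in>PD. \<not> incident P \<rho> \<and> \<not> incident P m}"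
    using z z_off by blast
  ultimately show ?thesis unfolding V_def[symmetric] by (rule card_inj_on_le) simp
qed

lemma card_projection_bound:
  fixes PD :: "'a::{field,finite} vec3 set set"
  assumes PD: "PD \<subseteq> pg_points" and u: "u \<in> pg_points" "u \<notin> PD" "incident u \<rho>" "\<not> incident u m"
    and lines: "\<rho> \<in> pg_points" "m \<in> pg_points"
    and through_u: "\<And>L. L \<in> pg_points \<Longrightarrow> incident u L \<Longrightarrow> L \<noteq> \<rho> \<Longrightarrow> \<exists>P\<in>PD. incident P L"
  shows "CARD('a) + card {P\<in>PD. incident P \<rho>} \<le> card PD"
proof -
  define V where "V = {v\<in>pg_points. incident v m \<and> \<not> incident v \<rho>}"
  have "m \<noteq> \<rho>" using u(3,4) by blast
  then obtain X where X: "X \<in> pg_points" "incident X m" "incident X \<rho>"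
    using meet_exists[OF lines(2,1)] by blast
  have "{P\<in>pg_points. incident P m} - {X} \<subseteq> V"
    using meet_unique[OF lines(2,1) \<open>m \<noteq> \<rho>\<close> _ X(1) _ _ X(2,3)] unfolding V_def by blast
  hence "card ({P\<in>pg_points. incident P m} - {X}) \<le> card V" by (rule card_mono[rotated]) simp
  hence "CARD('a) \<le> card V" using card_points_on_line_minus_ge[OF lines(2), of X] by linarith
  moreover have "card V = card {v\<in>V. v \<in> PD} + card {v\<in>V. v \<notin> PD}"
    by (rule card_filter_split) simp
  moreover have "{v\<in>V. v \<notin> PD} = {v\<in>pg_points. incident v m \<and> \<not> incident v \<rho> \<and> v \<notin> PD}"
    unfolding V_def by blast
  hence "card {v\<in>V. v \<notin> PD} \<le> card {P\<in>PD. \<not> incident P \<rho> \<and> \<not> incident P m}"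
    using card_projection_le[OF assms] by simp
  moreover have "card {v\<in>V. v \<in> PD} \<le> card {P\<in>PD. \<not> incident P \<rho> \<and> incident P m}"
    unfolding V_def by (intro card_mono) auto
  moreover have "card PD = card {P\<in>PD. incident P \<rho>} + card {P\<in>PD. \<not> incident P \<rho>}"
    by (rule card_filter_split) simp
  moreover have "card {P\<in>PD. \<not> incident P \<rho>} =
      card {P\<in>PD. \<not> incident P \<rho> \<and> \<not> incident P m} + card {P\<in>PD. \<not> incident P \<rho> \<and> incident P m}"
    using card_filter_split[of "{P\<in>PD. \<not> incident P \<rho>}" "\<lambda>P. \<not> incident P m"] by (simp add: conj_ac)
  ultimately show ?thesis by linarith
qed

lemma concurrent_avoiding_bound:
  fixes PD LD :: "'a::{field,finite} vec3 set set"
  assumes dom: "dominating PD LD" and np: "\<not> primal CARD('a) PD LD"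
    and Q: "Q \<in> pg_points" "Q \<notin> PD" "\<forall>L\<in>lines_avoiding PD. incident Q L"
  shows "2 * CARD('a) \<le> card PD + card {L\<in>LD. \<not> incident Q L}"
proof -
  have "card {L\<in>LD. incident Q L} < card {L\<in>pg_points. incident Q L}"
    using nonprimal_card_lines_through_lt[OF np Q(1)] card_lines_through_point_ge[OF Q(1)] by linarith
  hence "\<not> {L\<in>pg_points. incident Q L} \<subseteq> {L\<in>LD. incident Q L}" by (meson card_mono finite leD)
  then obtain \<rho> where \<rho>: "\<rho> \<in> pg_points" "incident Q \<rho>" "\<rho> \<notin> LD" by blast
  have "card {P\<in>PD. incident P \<rho>} < card ({P\<in>pg_points. incident P \<rho>} - {Q})"
    using nonprimal_card_points_on_lt[OF np \<rho>(1)] card_points_on_line_minus_ge[OF \<rho>(1), of Q]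
    by linarith
  hence "\<not> {P\<in>pg_points. incident P \<rho>} - {Q} \<subseteq> {P\<in>PD. incident P \<rho>}" by (meson card_mono finite leD)
  then obtain u where u: "u \<in> pg_points" "incident u \<rho>" "u \<noteq> Q" "u \<notin> PD" by blast
  obtain m where m: "m \<in> pg_points" "incident Q m" "\<not> incident u m"
    using exists_line_off_point[OF Q(1) u(1)] u(3) by metis
  have "CARD('a) + card {P\<in>PD. incident P \<rho>} \<le> card PD"
  proof (rule card_projection_bound[OF dominatingD(1)[OF dom] u(1,4,2) m(3) \<rho>(1) m(1)])
    fix L assume L: "L \<in> pg_points" "incident u L" "L \<noteq> \<rho>"
    have "L \<notin> lines_avoiding PD"
      using join_unique[of u Q L \<rho>] Q L u \<rho> by auto
    thus "\<exists>P\<in>PD. incident P L" using L(1) unfolding lines_avoiding_def by blast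
  qed
  moreover have "CARD('a) \<le> card {L\<in>LD. \<not> incident Q L} + card {P\<in>PD. incident P \<rho>}"
    using card_dominated_line_bound[OF dom \<rho>(1,3) Q(1) \<rho>(2)] .
  ultimately show ?thesis by linarith
qed

lemma dominating_nonprimal_blocking:
  fixes PD LD :: "'a::{field,finite} vec3 set set"
  assumes dom: "dominating PD LD" and np: "\<not> primal CARD('a) PD LD"
    and size: "card PD + card LD + card PD \<le> 4 * CARD('a) - 3"
  shows "blocking_set PD"
proof (rule ccontr)
  assume "\<not> blocking_set PD"
  then obtain l0 where l0: "l0 \<in> lines_avoiding PD"
    using dominatingD(1)[OF dom]
    unfolding blocking_set_def lines_avoiding_def pg_lines_eq_pg_points by blast
  define M where "M = lines_avoiding PD"
  have M: "M \<subseteq> pg_points" "M \<subseteq> LD"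
    using dominatingD(4)[OF dom] unfolding M_def lines_avoiding_def by auto
  hence card_M: "card M \<le> card LD" by (intro card_mono) simp_all
  have q: "2 \<le> CARD('a)" by (rule CARD_field_ge_2)
  show False
  proof (cases "\<exists>h\<in>M. \<forall>P\<in>pg_points. incident P h \<longrightarrow> 2 * card {L\<in>M - {h}. incident P L} \<le> card M")
    case True
    then obtain h where h: "h \<in> M"
      and light: "\<forall>P\<in>pg_points. incident P h \<longrightarrow> 2 * card {L\<in>M - {h}. incident P L} \<le> card M"
      by blast
    obtain T where T: "T \<subseteq> pg_points" "\<forall>p\<in>T. \<not> incident p h" "\<forall>L\<in>M - {h}. \<exists>p\<in>T. incident p L"
      "2 * card T \<le> card M"
      using exists_light_cover[OF M(1) h light] by blast
    have "2 * CARD('a) - 1 \<le> card PD + card T"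
      using affine_blocking_bound[OF dominatingD(1)[OF dom] _ T(1,2)] h T(3) unfolding M_def by blast
    thus False using T(4) card_M size q by linarith
  next
    case False
    then obtain Q where Q: "Q \<in> pg_points" "\<forall>L\<in>M. incident Q L"
      using concurrent_if_heavy[OF M(1) l0[folded M_def]] by (meson not_le)
    have "Q \<notin> PD" using Q(2) l0 unfolding M_def lines_avoiding_def by blast
    have "2 * CARD('a) \<le> card PD + card M"
      using card_lines_avoiding_ge[OF dominatingD(1)[OF dom] l0] unfolding M_def .
    moreover have "2 * CARD('a) \<le> card PD + card {L\<in>LD. \<not> incident Q L}"
      using concurrent_avoiding_bound[OF dom np Q(1) \<open>Q \<notin> PD\<close>] Q(2) unfolding M_def by blast
    moreover have "card M \<le> card {L\<in>LD. incident Q L}" using M(2) Q(2) by (intro card_mono) auto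
    moreover have "card LD = card {L\<in>LD. incident Q L} + card {L\<in>LD. \<not> incident Q L}"
      by (rule card_filter_split) simp
    ultimately show False using size q by linarith
  qed
qed

lemma dominating_swap: "dominating PD LD \<Longrightarrow> dominating LD PD"
  unfolding dominating_def pg_lines_eq_pg_points using incident_commute by metis

lemma primal_swap: "primal q PD LD \<Longrightarrow> primal q LD PD"
  unfolding primal_def pg_lines_eq_pg_points using incident_commute by metis

lemma blocking_set_imp_covering_set: "blocking_set C \<Longrightarrow> covering_set C"
  unfolding blocking_set_def covering_set_def pg_lines_eq_pg_points using incident_commute by metis

theorem proposition5:
  fixes PD LD :: "('a::{field,finite}) vec3 set set"
  fixes q :: nat
  defines "q \<equiv> card (UNIV :: 'a set)"
  assumes dom: "dominating PD LD"
    and nonprimal: "\<not> primal q PD LD"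
  shows "(card PD + card LD + card PD \<le> 4*q - 3 \<longrightarrow> blocking_set PD) \<and>
         (card PD + card LD + card LD \<le> 4*q - 3 \<longrightarrow> covering_set LD)"
proof (intro conjI impI)
  assume "card PD + card LD + card PD \<le> 4*q - 3"
  thus "blocking_set PD"
    using dominating_nonprimal_blocking[OF dom] nonprimal unfolding q_def by blast
next
  assume "card PD + card LD + card LD \<le> 4*q - 3"
  hence "blocking_set LD"
    using dominating_nonprimal_blocking[OF dominating_swap[OF dom]] primal_swap nonprimal
    unfolding q_def by (metis add.commute)
  thus "covering_set LD" by (rule blocking_set_imp_covering_set)
qed

end
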